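(* Let $n\ge 2$ and let $f$ be the $n$-ary operation on $\mathbb{Z}_8$ given by $f(\mathbf{x})=x_1x_2\cdots x_n\sum_{\alpha\in I_n}b_\alpha\mathbf{x}^\alpha$ with $b_\alpha\in\{0,1\}$ for every $\alpha\in I_n$. If $f$ preserves the relation $Z$, then $b_\alpha=0$ for every $\alpha\in I_n$.
   Context: $I_n$ is the set of all $n$-tuples $\alpha\in\{0,1,2\}^n$ with at most two nonzero components, and $\mathbf{x}^\alpha=x_1^{\alpha_1}\cdots x_n^{\alpha_n}$. $P_4$ is the power set of $\{1,2,3,4\}$. For $A\in P_4$, $\mathbf{g}^A\in\mathbb{Z}_8^{P_4}$ is the tuple with $B$-component $1$ if $A\subseteq B$ and $0$ otherwise. Every $\mathbf{u}\in\mathbb{Z}_8^{P_4}$ has a unique expression $\mathbf{u}=\sum_{A\in P_4}a_A\mathbf{g}^A$ with $a_A\in\mathbb{Z}_8$. $Z\subseteq \mathbb{Z}_8^{P_4}$ consists of all $\mathbf{u}$ whose coefficients satisfy: (Z1) $a_{\{2\}}\equiv 2a_{\{1\}}\pmod 4$ and $a_{\{4\}}\equiv 2a_{\{3\}}\pmod 4$; (Z2) $a_A\equiv 0\pmod 2$ whenever $|A|\ge 2$; (Z3) $a_A\equiv 0\pmod 4$ whenever $|A|\ge 2$ and $A\cap\{2,4\}\neq\emptyset$; (Z4) $a_A=0$ whenever $\{2,4\}\subseteq A$. An operation preserves $Z$ if applying it componentwise to elements of $Z$ yields an element of $Z$. *)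

theory Defs
  imports Main
begin

text \<open>Z_8 is represented by the integers 0..7; all operations are taken mod 8.
  Tuples in Z_8^{P_4} are functions from subsets of {1,2,3,4} to Z_8 (value 0 outside P_4).\<close>

definition Z8 :: "int set" where
  "Z8 = {0..<8}"

definition P4 :: "nat set set" where
  "P4 = Pow {1,2,3,4}"

definition gen :: "nat set \<Rightarrow> nat set \<Rightarrow> int" where
  "gen A B = (if A \<subseteq> B then 1 else 0)"

definition lincomb :: "(nat set \<Rightarrow> int) \<Rightarrow> nat set \<Rightarrow> int" where
  "lincomb a = (\<lambda>B. if B \<in> P4 then (\<Sum>A\<in>P4. a A * gen A B) mod 8 else 0)"

definition Zcoeffs :: "(nat set \<Rightarrow> int) \<Rightarrow> bool" where
  "Zcoeffs a \<longleftrightarrow>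
     (\<forall>A\<in>P4. a A \<in> Z8) \<and>
     a {2} mod 4 = (2 * a {1}) mod 4 \<and> a {4} mod 4 = (2 * a {3}) mod 4 \<and>
     (\<forall>A\<in>P4. card A \<ge> 2 \<longrightarrow> a A mod 2 = 0) \<and>
     (\<forall>A\<in>P4. card A \<ge> 2 \<and> A \<inter> {2,4} \<noteq> {} \<longrightarrow> a A mod 4 = 0) \<and>
     (\<forall>A\<in>P4. {2,4} \<subseteq> A \<longrightarrow> a A = 0)"

text \<open>Since every tuple has a unique coefficient expression, Z is the set of tuples
  whose (unique) coefficients satisfy (Z1)-(Z4).\<close>
definition Zrel :: "(nat set \<Rightarrow> int) set" where
  "Zrel = {u. \<exists>a. Zcoeffs a \<and> u = lincomb a}"

definition preserves :: "nat \<Rightarrow> ((nat \<Rightarrow> int) \<Rightarrow> int) \<Rightarrow> (nat set \<Rightarrow> int) set \<Rightarrow> bool" where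
  "preserves n f R \<longleftrightarrow>
     (\<forall>us. (\<forall>i\<in>{1..n}. us i \<in> R) \<longrightarrow>
        (\<lambda>B. if B \<in> P4 then f (\<lambda>i. us i B) else 0) \<in> R)"

definition I :: "nat \<Rightarrow> (nat \<Rightarrow> nat) set" where
  "I n = {\<alpha>. (\<forall>i\<in>{1..n}. \<alpha> i \<le> 2) \<and> (\<forall>i. i \<notin> {1..n} \<longrightarrow> \<alpha> i = 0)
             \<and> card {i\<in>{1..n}. \<alpha> i \<noteq> 0} \<le> 2}"

definition monom :: "nat \<Rightarrow> (nat \<Rightarrow> nat) \<Rightarrow> (nat \<Rightarrow> int) \<Rightarrow> int" where
  "monom n \<alpha> x = (\<Prod>i\<in>{1..n}. x i ^ \<alpha> i)"

definition fop :: "nat \<Rightarrow> ((nat \<Rightarrow> nat) \<Rightarrow> int) \<Rightarrow> (nat \<Rightarrow> int) \<Rightarrow> int" where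
  "fop n b x = ((\<Prod>i\<in>{1..n}. x i) * (\<Sum>\<alpha>\<in>I n. b \<alpha> * monom n \<alpha> x)) mod 8"

end

theory Submission
  imports Defs "HOL-Number_Theory.Cong"
begin

(* Fix coordinates i ~= k and feed f the tuples g^{3} + 2 g^{4} at position i, g^{1} + 2 g^{2}
   at position k and the constant tuple g^{} elsewhere; all of them lie in Z. Component B of the
   result is x y R(x, y) mod 8, where (x, y) = ([3 in B] + 2 [4 in B], [1 in B] + 2 [2 in B])
   runs through {0..3}^2 and R(x, y) = sum_{p, q <= 2} m_pq x^p y^q, with m_pq the sum of the
   b_alpha such that alpha_i = p and alpha_k = q. The coefficients of this tuple are mixed finite
   differences of x y R(x, y), and (Z2)-(Z4) force every m_pq to be even. If alpha is supported
   in {i, k}, then m_{alpha_i alpha_k} is b_alpha plus coefficients b_beta of exponents with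
   strictly larger support, so downward induction on the support shows that every
   b_alpha in {0, 1} is even, hence zero. *)

lemma P4_Pow_subset: "B \<in> P4 \<Longrightarrow> Pow B \<subseteq> P4"
  by (auto simp: P4_def)

lemma finite_P4_member: "B \<in> P4 \<Longrightarrow> finite B"
  by (auto simp: P4_def intro: finite_subset)

lemma lincomb_apply: "B \<in> P4 \<Longrightarrow> lincomb a B = (\<Sum>A\<in>Pow B. a A) mod 8"
proof -
  assume B: "B \<in> P4"
  have "(\<Sum>A\<in>P4. a A * gen A B) = (\<Sum>A\<in>P4. if A \<subseteq> B then a A else 0)"
    by (rule sum.cong) (simp_all add: gen_def)
  also have "\<dots> = (\<Sum>A\<in>{A\<in>P4. A \<subseteq> B}. a A)"
    by (rule sum.inter_filter[symmetric]) (simp add: P4_def)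
  also have "{A\<in>P4. A \<subseteq> B} = Pow B" using P4_Pow_subset[OF B] by blast
  finally show ?thesis using B by (simp add: lincomb_def)
qed

lemma lincomb_Zrel: "Zcoeffs a \<Longrightarrow> lincomb a \<in> Zrel"
  by (auto simp: Zrel_def)

(* The coefficient a_A of the paper, recovered from the components of u by Moebius inversion
   on the Boolean lattice. *)
definition tuple_coeff :: "(nat set \<Rightarrow> int) \<Rightarrow> nat set \<Rightarrow> int" where
  "tuple_coeff u A = (\<Sum>T\<in>Pow A. (- 1) ^ (card A - card T) * u T)"

lemma cong_coeff_tuple_coeff:
  assumes "lincomb a = u" "A \<in> P4"
  shows "[a A = tuple_coeff u A] (mod 8)"
proof -
  have "a A = (\<Sum>T\<in>Pow A. (- 1) ^ (card A - card T) * (\<Sum>D\<in>Pow T. a D))"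
    by (rule inclusion_exclusion_mobius) (simp_all add: finite_P4_member[OF assms(2)])
  also have "[\<dots> = tuple_coeff u A] (mod 8)"
    unfolding tuple_coeff_def
  proof (intro cong_sum cong_mult cong_refl)
    fix T assume "T \<in> Pow A"
    then have "T \<in> P4" using P4_Pow_subset[OF assms(2)] by blast
    then show "[(\<Sum>D\<in>Pow T. a D) = u T] (mod 8)"
      using assms(1) by (auto simp: lincomb_apply cong_def)
  qed
  finally show ?thesis .
qed

lemma Zrel_tuple_coeff_dvd:
  assumes "u \<in> Zrel" and cong: "\<forall>B\<in>P4. [u B = v B] (mod 8)"
    and A: "A \<in> P4" "card A \<ge> 2"
  shows "2 dvd tuple_coeff v A"
    and "A \<inter> {2, 4} \<noteq> {} \<Longrightarrow> 4 dvd tuple_coeff v A"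
    and "{2, 4} \<subseteq> A \<Longrightarrow> 8 dvd tuple_coeff v A"
proof -
  obtain a where a: "Zcoeffs a" "lincomb a = u"
    using assms(1) by (auto simp: Zrel_def)
  have "[a A = tuple_coeff u A] (mod 8)"
    using a(2) A(1) by (rule cong_coeff_tuple_coeff)
  also have "[tuple_coeff u A = tuple_coeff v A] (mod 8)"
    unfolding tuple_coeff_def
    using cong P4_Pow_subset[OF A(1)] by (intro cong_sum cong_mult cong_refl) auto
  finally have cong_coeff: "[a A = tuple_coeff v A] (mod 8)" .
  have dvd_iff: "d dvd a A \<longleftrightarrow> d dvd tuple_coeff v A" if "d dvd 8" for d
    using cong_dvd_iff[OF cong_dvd_modulus[OF cong_coeff that]] .
  have "2 dvd a A"
    using a(1) A unfolding Zcoeffs_def dvd_eq_mod_eq_0 by blast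
  then show "2 dvd tuple_coeff v A"
    using dvd_iff[of 2] by simp
  show "4 dvd tuple_coeff v A" if "A \<inter> {2, 4} \<noteq> {}"
  proof -
    have "4 dvd a A"
      using a(1) A that unfolding Zcoeffs_def dvd_eq_mod_eq_0 by blast
    then show ?thesis using dvd_iff[of 4] by simp
  qed
  show "8 dvd tuple_coeff v A" if "{2, 4} \<subseteq> A"
  proof -
    have "a A = 0"
      using a(1) A that unfolding Zcoeffs_def by blast
    then show ?thesis using dvd_iff[of 8] by simp
  qed
qed

lemma sum_Pow_insert:
  assumes "finite A" "x \<notin> A"
  shows "(\<Sum>S\<in>Pow (insert x A). h S) = (\<Sum>S\<in>Pow A. h S) + (\<Sum>S\<in>Pow A. h (insert x S))"
proof -
  have "inj_on (insert x) (Pow A)" using assms(2) unfolding inj_on_def by auto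
  moreover have "Pow A \<inter> insert x ` Pow A = {}" using assms(2) by auto
  ultimately show ?thesis using assms(1)
    by (simp add: Pow_insert sum.union_disjoint sum.reindex)
qed

lemma tuple_coeff_empty [simp]: "tuple_coeff v {} = v {}"
  by (simp add: tuple_coeff_def)

lemma tuple_coeff_insert:
  assumes "finite A" "x \<notin> A"
  shows "tuple_coeff v (insert x A) = tuple_coeff (\<lambda>T. v (insert x T)) A - tuple_coeff v A"
proof -
  have card_le: "card S \<le> card A" if "S \<in> Pow A" for S
    using that assms(1) by (simp add: card_mono)
  have fin: "finite S" if "S \<in> Pow A" for S
    using that assms(1) finite_subset by auto
  have "tuple_coeff v (insert x A)
      = (\<Sum>S\<in>Pow A. (- 1) ^ Suc (card A - card S) * v S)
        + (\<Sum>S\<in>Pow A. (- 1) ^ (card A - card S) * v (insert x S))"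
    using assms by (auto simp: tuple_coeff_def sum_Pow_insert card_insert_if fin Suc_diff_le card_le
        intro!: sum.cong)
  then show ?thesis by (simp add: tuple_coeff_def sum_negf)
qed

definition bin2 :: "nat \<Rightarrow> nat \<Rightarrow> nat set \<Rightarrow> int" where
  "bin2 i j B = of_bool (i \<in> B) + 2 * of_bool (j \<in> B)"

definition bin2_tuple :: "nat \<Rightarrow> nat \<Rightarrow> nat set \<Rightarrow> int" where
  "bin2_tuple i j = lincomb (\<lambda>A. if A = {i} then 1 else if A = {j} then 2 else 0)"

definition one_tuple :: "nat set \<Rightarrow> int" where
  "one_tuple = lincomb (\<lambda>A. if A = {} then 1 else 0)"

lemma bin2_tuple_apply:
  assumes "B \<in> P4" "i \<noteq> j"
  shows "bin2_tuple i j B = bin2 i j B"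
  using assms finite_P4_member[OF assms(1)]
  by (simp add: bin2_tuple_def lincomb_apply bin2_def sum.If_cases Pow_def)

lemma one_tuple_apply: "B \<in> P4 \<Longrightarrow> one_tuple B = 1"
  using finite_P4_member by (simp add: one_tuple_def lincomb_apply)

lemma bin2_tuple_Zrel: "bin2_tuple 1 2 \<in> Zrel" "bin2_tuple 3 4 \<in> Zrel"
  unfolding bin2_tuple_def by (auto intro!: lincomb_Zrel simp: Zcoeffs_def Z8_def)

lemma one_tuple_Zrel: "one_tuple \<in> Zrel"
  unfolding one_tuple_def by (auto intro!: lincomb_Zrel simp: Zcoeffs_def Z8_def)

definition bipoly :: "(nat \<Rightarrow> nat \<Rightarrow> int) \<Rightarrow> int \<Rightarrow> int \<Rightarrow> int" where
  "bipoly m x y = (\<Sum>p\<le>2. \<Sum>q\<le>2. m p q * x ^ p * y ^ q)"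

lemma bipoly_expand:
  "bipoly m x y = m 0 0 + m 0 1 * y + m 0 2 * y^2 + m 1 0 * x + m 1 1 * x * y + m 1 2 * x * y^2
     + m 2 0 * x^2 + m 2 1 * x^2 * y + m 2 2 * x^2 * y^2"
  by (simp add: bipoly_def numeral_2_eq_2 atMost_Suc algebra_simps)

lemma bipoly_coeffs_even:
  fixes m :: "nat \<Rightarrow> nat \<Rightarrow> int"
  assumes c13: "even (bipoly m 1 1)"
    and c14: "4 dvd 2 * bipoly m 2 1"
    and c23: "4 dvd 2 * bipoly m 1 2"
    and c24: "8 dvd 4 * bipoly m 2 2"
    and c123: "4 dvd 3 * bipoly m 1 3 - 2 * bipoly m 1 2 - bipoly m 1 1"
    and c134: "4 dvd 3 * bipoly m 3 1 - 2 * bipoly m 2 1 - bipoly m 1 1"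
    and c124: "8 dvd 2 * (3 * bipoly m 2 3 - 2 * bipoly m 2 2 - bipoly m 2 1)"
    and c234: "8 dvd 2 * (3 * bipoly m 3 2 - 2 * bipoly m 2 2 - bipoly m 1 2)"
    and c1234: "8 dvd 3 * (3 * bipoly m 3 3 - 2 * bipoly m 3 2 - bipoly m 3 1)
                 - 2 * (3 * bipoly m 2 3 - 2 * bipoly m 2 2 - bipoly m 2 1)
                 - (3 * bipoly m 1 3 - 2 * bipoly m 1 2 - bipoly m 1 1)"
    and "p \<le> 2" "q \<le> 2"
  shows "even (m p q)"
proof -
  note expand = bipoly_expand power2_eq_square
  \<comment> \<open>Each of c24, c124, c234, c1234 reduces modulo 8 to 4 m_pq = 0 for one corner
    (p, q) of {0, 2}^2; the edge coefficients and the centre follow.\<close>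
  have 00: "even (m 0 0)" using c24 unfolding expand by presburger
  have 02: "even (m 0 2)" using c124 unfolding expand by presburger
  have 20: "even (m 2 0)" using c234 unfolding expand by presburger
  have 22: "even (m 2 2)" using c1234 unfolding expand by presburger
  have 01: "even (m 0 1)" using c14 00 02 unfolding expand by presburger
  have 10: "even (m 1 0)" using c23 00 20 unfolding expand by presburger
  have 12: "even (m 1 2)" using c123 02 22 unfolding expand by presburger
  have 21: "even (m 2 1)" using c134 20 22 unfolding expand by presburger
  have "even (m 1 1)" using c13 00 01 02 10 12 20 21 22 unfolding expand by presburger
  with 00 01 02 10 12 20 21 22 \<open>p \<le> 2\<close> \<open>q \<le> 2\<close> show ?thesis
    by (auto simp: le_Suc_eq numeral_2_eq_2)
qed

lemma Zrel_bipoly_coeffs_even: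
  fixes m :: "nat \<Rightarrow> nat \<Rightarrow> int"
  defines "v \<equiv> \<lambda>B. bin2 3 4 B * bin2 1 2 B * bipoly m (bin2 3 4 B) (bin2 1 2 B)"
  assumes "u \<in> Zrel" "\<forall>B\<in>P4. [u B = v B] (mod 8)" "p \<le> 2" "q \<le> 2"
  shows "even (m p q)"
proof (rule bipoly_coeffs_even)
  note dvd = Zrel_tuple_coeff_dvd[OF assms(2,3), unfolded v_def]
  have P4: "A \<subseteq> {1,2,3,4} \<Longrightarrow> A \<in> P4" for A by (simp add: P4_def)
  note simps = tuple_coeff_insert bin2_def P4
  show "even (bipoly m 1 1)" using dvd(1)[of "{1,3}"] by (simp add: simps algebra_simps)
  show "4 dvd 2 * bipoly m 2 1" using dvd(2)[of "{1,4}"] by (simp add: simps algebra_simps)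
  show "4 dvd 2 * bipoly m 1 2" using dvd(2)[of "{2,3}"] by (simp add: simps algebra_simps)
  show "8 dvd 4 * bipoly m 2 2" using dvd(3)[of "{2,4}"] by (simp add: simps algebra_simps)
  show "4 dvd 3 * bipoly m 1 3 - 2 * bipoly m 1 2 - bipoly m 1 1"
    using dvd(2)[of "{1,2,3}"] by (simp add: simps algebra_simps)
  show "4 dvd 3 * bipoly m 3 1 - 2 * bipoly m 2 1 - bipoly m 1 1"
    using dvd(2)[of "{1,3,4}"] by (simp add: simps algebra_simps)
  show "8 dvd 2 * (3 * bipoly m 2 3 - 2 * bipoly m 2 2 - bipoly m 2 1)"
    using dvd(3)[of "{1,2,4}"] by (simp add: simps algebra_simps)
  show "8 dvd 2 * (3 * bipoly m 3 2 - 2 * bipoly m 2 2 - bipoly m 1 2)"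
    using dvd(3)[of "{2,3,4}"] by (simp add: simps algebra_simps)
  show "8 dvd 3 * (3 * bipoly m 3 3 - 2 * bipoly m 3 2 - bipoly m 3 1)
                 - 2 * (3 * bipoly m 2 3 - 2 * bipoly m 2 2 - bipoly m 2 1)
                 - (3 * bipoly m 1 3 - 2 * bipoly m 1 2 - bipoly m 1 1)"
    using dvd(3)[of "{1,2,3,4}"] by (simp add: simps algebra_simps)
qed (use assms in auto)

definition slice_sum :: "nat \<Rightarrow> ((nat \<Rightarrow> nat) \<Rightarrow> int) \<Rightarrow> nat \<Rightarrow> nat \<Rightarrow> nat \<Rightarrow> nat \<Rightarrow> int" where
  "slice_sum n b i k p q = (\<Sum>\<alpha>\<in>{\<alpha>\<in>I n. \<alpha> i = p \<and> \<alpha> k = q}. b \<alpha>)"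

lemma finite_I: "finite (I n)"
proof -
  have "I n \<subseteq> {f. \<forall>x. (x \<in> {1..n} \<longrightarrow> f x \<in> {..2}) \<and> (x \<notin> {1..n} \<longrightarrow> f x = 0)}"
    by (auto simp: I_def)
  then show ?thesis by (rule finite_subset) (rule finite_set_of_finite_funs; simp)
qed

lemma prod_eq_two_factors:
  fixes h :: "nat \<Rightarrow> 'a::comm_monoid_mult"
  assumes "i \<in> S" "k \<in> S" "i \<noteq> k" "finite S"
    and "\<And>j. j \<in> S \<Longrightarrow> j \<noteq> i \<Longrightarrow> j \<noteq> k \<Longrightarrow> h j = 1"
  shows "(\<Prod>j\<in>S. h j) = h i * h k"
proof -
  have "(\<Prod>j\<in>S. h j) = (\<Prod>j\<in>{i, k}. h j)"
    using assms by (intro prod.mono_neutral_right) auto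
  then show ?thesis using assms(3) by simp
qed

lemma sum_I_eq_bipoly:
  assumes "i \<in> {1..n}" "k \<in> {1..n}"
  shows "(\<Sum>\<alpha>\<in>I n. b \<alpha> * (x ^ \<alpha> i * y ^ \<alpha> k)) = bipoly (slice_sum n b i k) x y"
proof -
  have bound: "\<alpha> i \<le> 2 \<and> \<alpha> k \<le> 2" if "\<alpha> \<in> I n" for \<alpha>
    using assms that by (auto simp: I_def)
  have "(\<Sum>\<alpha>\<in>I n. b \<alpha> * (x ^ \<alpha> i * y ^ \<alpha> k))
      = (\<Sum>pq\<in>{..2} \<times> {..2}. \<Sum>\<alpha>\<in>{\<alpha>\<in>I n. (\<alpha> i, \<alpha> k) = pq}. b \<alpha> * (x ^ \<alpha> i * y ^ \<alpha> k))"
    by (rule sum.group[symmetric]) (auto simp: finite_I dest: bound)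
  also have "\<dots> = (\<Sum>(p, q)\<in>{..2} \<times> {..2}. slice_sum n b i k p q * x ^ p * y ^ q)"
    by (rule sum.cong) (auto simp: slice_sum_def sum_distrib_right mult.assoc intro!: sum.cong)
  finally show ?thesis
    by (simp add: bipoly_def sum.cartesian_product)
qed

lemma fop_eq_bipoly:
  assumes "i \<in> {1..n}" "k \<in> {1..n}" "i \<noteq> k"
    and "\<And>j. j \<in> {1..n} \<Longrightarrow> j \<noteq> i \<Longrightarrow> j \<noteq> k \<Longrightarrow> x j = 1"
  shows "fop n b x = (x i * x k * bipoly (slice_sum n b i k) (x i) (x k)) mod 8"
proof -
  have "monom n \<alpha> x = x i ^ \<alpha> i * x k ^ \<alpha> k" for \<alpha>
    unfolding monom_def using assms by (intro prod_eq_two_factors) auto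
  moreover have "(\<Prod>j\<in>{1..n}. x j) = x i * x k"
    using assms by (intro prod_eq_two_factors) auto
  ultimately show ?thesis
    using sum_I_eq_bipoly[OF assms(1,2)] by (simp add: fop_def)
qed

lemma slice_sum_even:
  assumes "preserves n (fop n b) Zrel" "i \<in> {1..n}" "k \<in> {1..n}" "i \<noteq> k" "p \<le> 2" "q \<le> 2"
  shows "even (slice_sum n b i k p q)"
proof -
  define us where "us j = (if j = i then bin2_tuple 3 4 else if j = k then bin2_tuple 1 2 else one_tuple)"
    for j
  have "\<forall>j\<in>{1..n}. us j \<in> Zrel"
    using bin2_tuple_Zrel one_tuple_Zrel by (simp add: us_def)
  then have image: "(\<lambda>B. if B \<in> P4 then fop n b (\<lambda>j. us j B) else 0) \<in> Zrel"
    using assms(1) unfolding preserves_def by blast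
  have "fop n b (\<lambda>j. us j B)
      = (bin2 3 4 B * bin2 1 2 B * bipoly (slice_sum n b i k) (bin2 3 4 B) (bin2 1 2 B)) mod 8"
    if "B \<in> P4" for B
    using assms(2-4) that
    by (subst fop_eq_bipoly[of i n k]) (auto simp: us_def bin2_tuple_apply one_tuple_apply)
  then show ?thesis
    using assms(5,6) by (intro Zrel_bipoly_coeffs_even[OF image]) (simp add: cong_def)
qed

definition support :: "(nat \<Rightarrow> nat) \<Rightarrow> nat set" where
  "support \<alpha> = {j. \<alpha> j \<noteq> 0}"

lemma support_I:
  assumes "\<alpha> \<in> I n"
  shows "support \<alpha> \<subseteq> {1..n}" "card (support \<alpha>) \<le> 2"
proof -
  have "support \<alpha> = {j\<in>{1..n}. \<alpha> j \<noteq> 0}"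
    using assms by (auto simp: support_def I_def)
  then show "support \<alpha> \<subseteq> {1..n}" "card (support \<alpha>) \<le> 2"
    using assms by (auto simp: I_def)
qed

lemma support_I_within_pair:
  assumes "n \<ge> 2" "\<alpha> \<in> I n"
  obtains i k where "i \<in> {1..n}" "k \<in> {1..n}" "i \<noteq> k" "support \<alpha> \<subseteq> {i, k}"
proof -
  obtain T where "support \<alpha> \<subseteq> T" "T \<subseteq> {1..n}" "card T = 2"
    using exists_subset_between[of "support \<alpha>" 2 "{1..n}"] support_I[OF assms(2)] assms(1) by auto
  then show ?thesis
    using that by (auto simp: card_2_iff)
qed

lemma support_psubset_I:
  assumes "\<alpha> \<in> I n" "\<beta> \<in> I n" "\<beta> \<noteq> \<alpha>" "support \<alpha> \<subseteq> {i, k}" "\<beta> i = \<alpha> i" "\<beta> k = \<alpha> k"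
  shows "support \<alpha> \<subset> support \<beta>"
proof -
  obtain j where "\<beta> j \<noteq> \<alpha> j" using assms(3) by blast
  with assms(4-6) have "j \<in> support \<beta> - support \<alpha>"
    by (auto simp: support_def)
  moreover have "support \<alpha> \<subseteq> support \<beta>"
    using assms(4-6) by (auto simp: support_def)
  ultimately show ?thesis by blast
qed

lemma I_zero_if_slice_sums_even:
  assumes "n \<ge> 2" "\<forall>\<alpha>\<in>I n. b \<alpha> \<in> {0, 1}"
    and even: "\<And>i k p q. i \<in> {1..n} \<Longrightarrow> k \<in> {1..n} \<Longrightarrow> i \<noteq> k \<Longrightarrow> p \<le> 2 \<Longrightarrow> q \<le> 2
                 \<Longrightarrow> even (slice_sum n b i k p q)"
    and "\<alpha> \<in> I n"
  shows "b \<alpha> = 0"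
  using \<open>\<alpha> \<in> I n\<close>
  \<comment> \<open>The slice through the support of alpha contains alpha, and otherwise only exponents
    with strictly larger support.\<close>
proof (induction \<alpha> rule: measure_induct_rule[where f = "\<lambda>\<alpha>. 2 - card (support \<alpha>)"])
  case (less \<alpha>)
  obtain i k where ik: "i \<in> {1..n}" "k \<in> {1..n}" "i \<noteq> k" "support \<alpha> \<subseteq> {i, k}"
    using support_I_within_pair[OF assms(1) less.prems] .
  define S where "S = {\<beta>\<in>I n. \<beta> i = \<alpha> i \<and> \<beta> k = \<alpha> k}"
  have larger_zero: "b \<beta> = 0" if "\<beta> \<in> S - {\<alpha>}" for \<beta>
  proof (rule less.IH)
    show \<beta>: "\<beta> \<in> I n" using that by (simp add: S_def)
    have "support \<alpha> \<subset> support \<beta>"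
      using that less.prems ik(4) by (intro support_psubset_I) (auto simp: S_def)
    moreover have "finite (support \<beta>)"
      using support_I(1)[OF \<beta>] finite_subset by blast
    ultimately have "card (support \<alpha>) < card (support \<beta>)"
      by (rule psubset_card_mono[rotated])
    then show "2 - card (support \<beta>) < 2 - card (support \<alpha>)"
      using support_I(2)[OF \<beta>] by linarith
  qed
  have "slice_sum n b i k (\<alpha> i) (\<alpha> k) = b \<alpha> + (\<Sum>\<beta>\<in>S - {\<alpha>}. b \<beta>)"
    unfolding slice_sum_def S_def[symmetric]
    using less.prems finite_I by (intro sum.remove) (auto simp: S_def)
  also have "(\<Sum>\<beta>\<in>S - {\<alpha>}. b \<beta>) = 0"
    using larger_zero by simp
  finally have "slice_sum n b i k (\<alpha> i) (\<alpha> k) = b \<alpha>" by simp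
  moreover have "\<alpha> i \<le> 2" "\<alpha> k \<le> 2"
    using less.prems ik by (auto simp: I_def)
  ultimately have "even (b \<alpha>)"
    using even[OF ik(1-3)] by metis
  then show ?case
    using assms(2) less.prems by auto
qed

theorem lemma3p8:
  fixes n :: nat and b :: "(nat \<Rightarrow> nat) \<Rightarrow> int"
  assumes "n \<ge> 2"
    and "\<forall>\<alpha>\<in>I n. b \<alpha> \<in> {0, 1}"
    and "preserves n (fop n b) Zrel"
  shows "\<forall>\<alpha>\<in>I n. b \<alpha> = 0"
  using I_zero_if_slice_sums_even[OF assms(1,2) slice_sum_even[OF assms(3)]] by blast

end
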